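(* Let $(X_i)_{i\in\mathbb{Z}}$ be a stationary strongly nonergodic process over a finite alphabet $\mathbb{X}$. Suppose that for some $\beta\in(0,1)$ and $\delta\in(\tfrac12,1)$, and for some IID binary process $(Z_k)_{k\in\mathbb{N}}$ with $P(Z_k=0)=P(Z_k=1)=\tfrac12$ and functions $s_k:\mathbb{X}^*\to\{0,1\}$ satisfying $\lim_{n\to\infty}P(s_k(X_{t+1:t+n})=Z_k)=1$ for all $k\in\mathbb{N}$, $t\in\mathbb{Z}$, the sets $U_\delta(n):=\{k\in\mathbb{N}: P(s_k(X_{1:n})=Z_k)\ge\delta\}$ satisfy $\liminf_{n\to\infty}\operatorname{card}U_\delta(n)/n^\beta>0$. Then $$\limsup_{n\to\infty}\frac{E(n)}{n^\beta}>0,$$ where $E(n):=2H(n)-H(2n)=I(X_{1:n};X_{n+1:2n})$.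
   Context: $X_{m:n}:=(X_i)_{m\le i\le n}$. $H(n):=H(X_{t+1:t+n})=-\mathbb{E}\log P(X_{t+1:t+n})$ is the block entropy (natural logarithm). A process is strongly nonergodic if there exist an IID binary process $(Z_k)_{k\in\mathbb{N}}$ with $P(Z_k=0)=P(Z_k=1)=\frac12$ and functions $s_k:\mathbb{X}^*\to\{0,1\}$ with $\lim_{n\to\infty}P(s_k(X_{t+1:t+n})=Z_k)=1$ for all $t\in\mathbb{Z}$, $k\in\mathbb{N}$. *)

theory Defs
  imports "HOL-Probability.Probability"
begin

definition block :: "(int \<Rightarrow> 'w \<Rightarrow> 'x) \<Rightarrow> int \<Rightarrow> nat \<Rightarrow> 'w \<Rightarrow> 'x list" where
  "block X t n \<omega> = map (\<lambda>i. X (t + 1 + int i) \<omega>) [0..<n]"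

definition stationary_proc :: "'w measure \<Rightarrow> (int \<Rightarrow> 'w \<Rightarrow> 'x) \<Rightarrow> bool" where
  "stationary_proc M X \<longleftrightarrow>
     (\<forall>t n w. measure M {\<omega>\<in>space M. block X t n \<omega> = w} = measure M {\<omega>\<in>space M. block X 0 n \<omega> = w})"

definition block_entropy :: "'w measure \<Rightarrow> (int \<Rightarrow> 'w \<Rightarrow> 'x::finite) \<Rightarrow> nat \<Rightarrow> real" where
  "block_entropy M X n =
     - (\<Sum>w\<in>{w::'x list. length w = n}.
          measure M {\<omega>\<in>space M. block X 0 n \<omega> = w} * ln (measure M {\<omega>\<in>space M. block X 0 n \<omega> = w}))"

definition excess_entropy :: "'w measure \<Rightarrow> (int \<Rightarrow> 'w \<Rightarrow> 'x::finite) \<Rightarrow> nat \<Rightarrow> real" where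
  "excess_entropy M X n = 2 * block_entropy M X n - block_entropy M X (2 * n)"

definition ecard :: "'a set \<Rightarrow> ereal" where
  "ecard A = (if finite A then ereal (real (card A)) else \<infinity>)"

end

theory Submission
  imports Defs
begin

text \<open>
  Stationarity and the convergence hypothesis make the accuracy of the decoder s_k shift
  invariant, so for k \<in> U_\<delta>(n) the key Z_k is recovered from every n-block with error
  probability at most 1 - \<delta> < 1/2. By Fano's inequality each such key then costs at most
  h(1 - \<delta>) < ln 2 nats once a block is known, while the keys of a finite U \<subseteq> U_\<delta>(n)
  jointly carry card U * ln 2 nats. Cutting X_{1:mn} into m blocks and conditioning on these
  keys gives card U * (ln 2 - h(1 - \<delta>) - ln 2 / m) \<le> H(n) - H(mn) / m, and for m = 2^J the
  right-hand side telescopes to \<Sum>_{j<J} E(2^j n) / 2^{j+1}. Hence card U_\<delta>(n) is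
  O(max_{j<J} E(2^j n)), which is incompatible with card U_\<delta>(n) \<ge> c n^\<beta> unless
  E(n) / n^\<beta> has positive limsup.
\<close>

section \<open>Entropy of discrete random variables\<close>

text \<open>Shannon entropy in nats; the sum is over the range of f, so this is only meaningful
  for simple functions.\<close>
definition discrete_entropy :: "'w measure \<Rightarrow> ('w \<Rightarrow> 'a) \<Rightarrow> real" where
  "discrete_entropy M f =
     - (\<Sum>a\<in>f ` space M. measure M (f -` {a} \<inter> space M) * ln (measure M (f -` {a} \<inter> space M)))"

lemma discrete_entropy_fibers:
  "discrete_entropy M f =
    - (\<Sum>F\<in>(\<lambda>\<omega>. {\<omega>'\<in>space M. f \<omega>' = f \<omega>}) ` space M. measure M F * ln (measure M F))"
proof -
  have "(\<lambda>\<omega>. {\<omega>'\<in>space M. f \<omega>' = f \<omega>}) ` space M = (\<lambda>a. f -` {a} \<inter> space M) ` (f ` space M)"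
    by (auto simp: image_image intro!: image_cong)
  moreover have "inj_on (\<lambda>a. f -` {a} \<inter> space M) (f ` space M)"
    by (auto simp: inj_on_def)
  ultimately show ?thesis
    by (simp add: discrete_entropy_def sum.reindex o_def)
qed

lemma discrete_entropy_cong:
  assumes "\<And>\<omega> \<omega>'. \<omega> \<in> space M \<Longrightarrow> \<omega>' \<in> space M \<Longrightarrow> f \<omega> = f \<omega>' \<longleftrightarrow> g \<omega> = g \<omega>'"
  shows "discrete_entropy M f = discrete_entropy M g"
proof -
  have "(\<lambda>\<omega>. {\<omega>'\<in>space M. f \<omega>' = f \<omega>}) ` space M = (\<lambda>\<omega>. {\<omega>'\<in>space M. g \<omega>' = g \<omega>}) ` space M"
    using assms by (intro image_cong refl) blast
  then show ?thesis
    by (simp add: discrete_entropy_fibers[of M f] discrete_entropy_fibers[of M g])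
qed

lemma discrete_entropy_swap:
  "discrete_entropy M (\<lambda>\<omega>. (f \<omega>, g \<omega>)) = discrete_entropy M (\<lambda>\<omega>. (g \<omega>, f \<omega>))"
  by (rule discrete_entropy_cong) auto

lemma discrete_entropy_eq_sum:
  assumes "finite A" "f ` space M \<subseteq> A"
  shows "discrete_entropy M f =
    - (\<Sum>a\<in>A. measure M (f -` {a} \<inter> space M) * ln (measure M (f -` {a} \<inter> space M)))"
  unfolding discrete_entropy_def
proof (intro arg_cong[where f=uminus] sum.mono_neutral_left assms ballI)
  fix a assume "a \<in> A - f ` space M"
  then have "f -` {a} \<inter> space M = {}"
    by auto
  then show "measure M (f -` {a} \<inter> space M) * ln (measure M (f -` {a} \<inter> space M)) = 0"
    by simp
qed

lemma restrict_eq_restrict_iff: "restrict f U = restrict g U \<longleftrightarrow> (\<forall>i\<in>U. f i = g i)"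
  by (auto simp: restrict_def fun_eq_iff)

lemma simple_function_restrict:
  assumes "finite U" "\<And>k. k \<in> U \<Longrightarrow> simple_function M (Y k)"
  shows "simple_function M (\<lambda>\<omega>. restrict (\<lambda>k. Y k \<omega>) U)"
  using assms
proof (induction U rule: finite_induct)
  case (insert k U)
  have "simple_function M (\<lambda>\<omega>. restrict (\<lambda>k. Y k \<omega>) U)"
    by (rule insert.IH) (simp add: insert.prems)
  moreover have "simple_function M (Y k)"
    by (simp add: insert.prems)
  ultimately have "simple_function M (\<lambda>\<omega>. (\<lambda>(r, y). r(k := y)) (restrict (\<lambda>k. Y k \<omega>) U, Y k \<omega>))"
    by (rule simple_function_compose1[OF simple_function_Pair])
  moreover have "(\<lambda>\<omega>. (\<lambda>(r, y). r(k := y)) (restrict (\<lambda>k. Y k \<omega>) U, Y k \<omega>))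
      = (\<lambda>\<omega>. restrict (\<lambda>k. Y k \<omega>) (insert k U))"
    by (auto simp: fun_eq_iff restrict_def)
  ultimately show ?case
    by (simp only:)
qed (simp add: restrict_def)

context prob_space
begin

lemma sum_prob_vimage_comp:
  assumes f: "simple_function M f"
  shows "(\<Sum>a\<in>f ` space M. prob (f -` {a} \<inter> space M) * g (\<pi> a))
       = (\<Sum>u\<in>(\<lambda>\<omega>. \<pi> (f \<omega>)) ` space M. prob ((\<lambda>\<omega>. \<pi> (f \<omega>)) -` {u} \<inter> space M) * g u)"
proof -
  have fin: "finite (f ` space M)"
    using f by (simp add: simple_functionD)
  have fiber: "(\<Sum>a\<in>{a\<in>f ` space M. \<pi> a = u}. prob (f -` {a} \<inter> space M))
      = prob ((\<lambda>\<omega>. \<pi> (f \<omega>)) -` {u} \<inter> space M)" for u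
  proof -
    have "(\<Sum>a\<in>{a\<in>f ` space M. \<pi> a = u}. prob (f -` {a} \<inter> space M))
        = prob (\<Union>a\<in>{a\<in>f ` space M. \<pi> a = u}. f -` {a} \<inter> space M)"
      using fin f
      by (intro measure_finite_Union[symmetric]) (auto simp: disjoint_family_on_def simple_functionD)
    also have "(\<Union>a\<in>{a\<in>f ` space M. \<pi> a = u}. f -` {a} \<inter> space M) = (\<lambda>\<omega>. \<pi> (f \<omega>)) -` {u} \<inter> space M"
      by auto
    finally show ?thesis .
  qed
  have "(\<Sum>a\<in>f ` space M. prob (f -` {a} \<inter> space M) * g (\<pi> a))
     = (\<Sum>u\<in>\<pi> ` f ` space M. \<Sum>a\<in>{a\<in>f ` space M. \<pi> a = u}. prob (f -` {a} \<inter> space M) * g (\<pi> a))"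
    by (rule sum.image_gen[OF fin])
  also have "\<dots> = (\<Sum>u\<in>\<pi> ` f ` space M. prob ((\<lambda>\<omega>. \<pi> (f \<omega>)) -` {u} \<inter> space M) * g u)"
    by (intro sum.cong refl) (simp add: sum_distrib_right[symmetric] fiber)
  finally show ?thesis
    by (simp add: image_image)
qed

lemma discrete_entropy_le_pair:
  assumes X: "simple_function M X" and Y: "simple_function M Y"
  shows "discrete_entropy M Y \<le> discrete_entropy M (\<lambda>\<omega>. (X \<omega>, Y \<omega>))"
proof -
  let ?T = "\<lambda>\<omega>. (X \<omega>, Y \<omega>)"
  have T: "simple_function M ?T"
    using X Y by (rule simple_function_Pair)
  let ?p = "\<lambda>t. prob (?T -` {t} \<inter> space M)"
  let ?q = "\<lambda>y. prob (Y -` {y} \<inter> space M)"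
  have marginal: "(\<Sum>t\<in>?T ` space M. ?p t * ln (?q (snd t))) = (\<Sum>u\<in>Y ` space M. ?q u * ln (?q u))"
    using sum_prob_vimage_comp[OF T, of "\<lambda>u. ln (?q u)" snd] by simp
  have "(\<Sum>t\<in>?T ` space M. ?p t * ln (?p t)) \<le> (\<Sum>t\<in>?T ` space M. ?p t * ln (?q (snd t)))"
  proof (rule sum_mono)
    fix t assume "t \<in> ?T ` space M"
    then have "?p t \<le> ?q (snd t)"
      using T Y by (intro finite_measure_mono) (auto simp: simple_functionD)
    then show "?p t * ln (?p t) \<le> ?p t * ln (?q (snd t))"
    proof (cases "?p t = 0")
      case False
      then have "0 < ?p t"
        using measure_nonneg[of M "?T -` {t} \<inter> space M"] by linarith
      with \<open>?p t \<le> ?q (snd t)\<close> show ?thesis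
        by (intro mult_left_mono) auto
    qed simp
  qed
  then show ?thesis
    by (simp add: discrete_entropy_def marginal)
qed

text \<open>Submodularity is the nonnegativity of the conditional mutual information I(X; Y | Z),
  expanded into the four entropies.\<close>
lemma discrete_entropy_submodular:
  assumes X: "simple_function M X" and Y: "simple_function M Y" and Z: "simple_function M Z"
  shows "discrete_entropy M (\<lambda>\<omega>. (X \<omega>, Y \<omega>, Z \<omega>)) + discrete_entropy M Z
    \<le> discrete_entropy M (\<lambda>\<omega>. (X \<omega>, Z \<omega>)) + discrete_entropy M (\<lambda>\<omega>. (Y \<omega>, Z \<omega>))"
proof -
  interpret I: information_space M "exp 1"
    by unfold_locales simp
  let ?T = "\<lambda>\<omega>. (X \<omega>, Y \<omega>, Z \<omega>)"
  let ?XZ = "\<lambda>\<omega>. (X \<omega>, Z \<omega>)"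
  let ?YZ = "\<lambda>\<omega>. (Y \<omega>, Z \<omega>)"
  have T: "simple_function M ?T" and XZ: "simple_function M ?XZ" and YZ: "simple_function M ?YZ"
    using X Y Z by (auto intro!: simple_function_Pair)
  let ?p = "\<lambda>t. prob (?T -` {t} \<inter> space M)"
  let ?a = "\<lambda>t. prob (?XZ -` {t} \<inter> space M)"
  let ?c = "\<lambda>t. prob (?YZ -` {t} \<inter> space M)"
  let ?d = "\<lambda>t. prob (Z -` {t} \<inter> space M)"
  have "0 \<le> conditional_mutual_information (exp 1) (count_space (X ` space M))
      (count_space (Y ` space M)) (count_space (Z ` space M)) X Y Z"
    by (rule I.conditional_mutual_information_nonneg[OF X Y Z])
  also have "\<dots> = (\<Sum>(x, y, z)\<in>?T ` space M.
      ?p (x, y, z) * log (exp 1) (?p (x, y, z) / (?a (x, z) * (?c (y, z) / ?d z))))"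
    by (rule I.conditional_mutual_information_eq;
        rule simple_distributedI[OF _ _ refl]; (fact | simp add: measure_nonneg))
  also have "\<dots> = (\<Sum>t\<in>?T ` space M. ?p t * ln (?p t) - ?p t * ln (?a (fst t, snd (snd t)))
       - ?p t * ln (?c (snd t)) + ?p t * ln (?d (snd (snd t))))"
  proof (intro sum.cong refl)
    fix t assume "t \<in> ?T ` space M"
    then obtain \<omega> where \<omega>: "\<omega> \<in> space M" and t: "t = (X \<omega>, Y \<omega>, Z \<omega>)"
      by auto
    have le: "?p t \<le> ?a (X \<omega>, Z \<omega>)" "?p t \<le> ?c (Y \<omega>, Z \<omega>)" "?p t \<le> ?d (Z \<omega>)"
      using T XZ YZ Z \<omega> t by (auto intro!: finite_measure_mono simp: simple_functionD)
    have "?p t * log (exp 1) (?p t / (?a (X \<omega>, Z \<omega>) * (?c (Y \<omega>, Z \<omega>) / ?d (Z \<omega>))))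
        = ?p t * ln (?p t) - ?p t * ln (?a (X \<omega>, Z \<omega>))
          - ?p t * ln (?c (Y \<omega>, Z \<omega>)) + ?p t * ln (?d (Z \<omega>))"
    proof (cases "?p t = 0")
      case False
      then have "0 < ?p t"
        using measure_nonneg[of M "?T -` {t} \<inter> space M"] by linarith
      moreover from this le have "0 < ?a (X \<omega>, Z \<omega>)" "0 < ?c (Y \<omega>, Z \<omega>)" "0 < ?d (Z \<omega>)"
        by linarith+
      ultimately show ?thesis
        by (simp add: log_def ln_div ln_mult algebra_simps)
    qed simp
    then show "(case t of (x, y, z) \<Rightarrow> ?p (x, y, z) * log (exp 1) (?p (x, y, z) / (?a (x, z) * (?c (y, z) / ?d z))))
        = ?p t * ln (?p t) - ?p t * ln (?a (fst t, snd (snd t)))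
          - ?p t * ln (?c (snd t)) + ?p t * ln (?d (snd (snd t)))"
      by (simp add: t)
  qed
  also have "\<dots> = - discrete_entropy M ?T + discrete_entropy M ?XZ + discrete_entropy M ?YZ
      - discrete_entropy M Z"
  proof -
    have "(\<Sum>t\<in>?T ` space M. ?p t * ln (?a (fst t, snd (snd t)))) = - discrete_entropy M ?XZ"
      using sum_prob_vimage_comp[OF T, of "\<lambda>u. ln (?a u)" "\<lambda>t. (fst t, snd (snd t))"]
      by (simp add: discrete_entropy_def)
    moreover have "(\<Sum>t\<in>?T ` space M. ?p t * ln (?c (snd t))) = - discrete_entropy M ?YZ"
      using sum_prob_vimage_comp[OF T, of "\<lambda>u. ln (?c u)" snd] by (simp add: discrete_entropy_def)
    moreover have "(\<Sum>t\<in>?T ` space M. ?p t * ln (?d (snd (snd t)))) = - discrete_entropy M Z"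
      using sum_prob_vimage_comp[OF T, of "\<lambda>u. ln (?d u)" "\<lambda>t. snd (snd t)"]
      by (simp add: discrete_entropy_def)
    ultimately show ?thesis
      by (simp add: sum.distrib sum_subtractf discrete_entropy_def)
  qed
  finally show ?thesis
    by simp
qed

lemma discrete_entropy_const: "discrete_entropy M (\<lambda>\<omega>. c) = 0"
proof -
  have "(\<lambda>\<omega>. c) ` space M = {c}"
    using not_empty by auto
  then show ?thesis
    by (simp add: discrete_entropy_def prob_space)
qed

lemma discrete_entropy_subadditive:
  assumes X: "simple_function M X" and Y: "simple_function M Y"
  shows "discrete_entropy M (\<lambda>\<omega>. (X \<omega>, Y \<omega>)) \<le> discrete_entropy M X + discrete_entropy M Y"
proof -
  have "discrete_entropy M (\<lambda>\<omega>. (X \<omega>, Y \<omega>, ())) + discrete_entropy M (\<lambda>\<omega>. ())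
      \<le> discrete_entropy M (\<lambda>\<omega>. (X \<omega>, ())) + discrete_entropy M (\<lambda>\<omega>. (Y \<omega>, ()))"
    using X Y by (intro discrete_entropy_submodular) auto
  moreover have "discrete_entropy M (\<lambda>\<omega>. (X \<omega>, Y \<omega>, ())) = discrete_entropy M (\<lambda>\<omega>. (X \<omega>, Y \<omega>))"
    "discrete_entropy M (\<lambda>\<omega>. (X \<omega>, ())) = discrete_entropy M X"
    "discrete_entropy M (\<lambda>\<omega>. (Y \<omega>, ())) = discrete_entropy M Y"
    by (rule discrete_entropy_cong; auto)+
  ultimately show ?thesis
    using discrete_entropy_const[of "()"] by simp
qed

lemma discrete_entropy_restrict_le:
  assumes U: "finite U" and C: "simple_function M C"
    and Y: "\<And>k. k \<in> U \<Longrightarrow> simple_function M (Y k)"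
  shows "discrete_entropy M (\<lambda>\<omega>. (C \<omega>, restrict (\<lambda>k. Y k \<omega>) U))
    \<le> discrete_entropy M C + (\<Sum>k\<in>U. discrete_entropy M (\<lambda>\<omega>. (C \<omega>, Y k \<omega>)) - discrete_entropy M C)"
  using U Y
proof (induction U rule: finite_induct)
  case empty
  have "discrete_entropy M (\<lambda>\<omega>. (C \<omega>, restrict (\<lambda>k. Y k \<omega>) {})) = discrete_entropy M C"
    by (rule discrete_entropy_cong) (simp add: restrict_eq_restrict_iff)
  then show ?case
    by (simp only: sum.empty add_0_right)
next
  case (insert k U)
  let ?R = "\<lambda>\<omega>. restrict (\<lambda>k. Y k \<omega>) U"
  have sf_R: "simple_function M ?R"
    using insert.prems by (intro simple_function_restrict[OF insert.hyps(1)]) simp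
  have sf_Y: "simple_function M (Y k)"
    using insert.prems by simp
  have "discrete_entropy M (\<lambda>\<omega>. (?R \<omega>, Y k \<omega>, C \<omega>)) + discrete_entropy M C
      \<le> discrete_entropy M (\<lambda>\<omega>. (?R \<omega>, C \<omega>)) + discrete_entropy M (\<lambda>\<omega>. (Y k \<omega>, C \<omega>))"
    by (rule discrete_entropy_submodular[OF sf_R sf_Y C])
  moreover have "discrete_entropy M (\<lambda>\<omega>. (C \<omega>, restrict (\<lambda>k. Y k \<omega>) (insert k U)))
      = discrete_entropy M (\<lambda>\<omega>. (?R \<omega>, Y k \<omega>, C \<omega>))"
    by (intro discrete_entropy_cong) (simp add: restrict_eq_restrict_iff conj_ac)
  moreover have "discrete_entropy M (\<lambda>\<omega>. (?R \<omega>, C \<omega>)) = discrete_entropy M (\<lambda>\<omega>. (C \<omega>, ?R \<omega>))"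
    "discrete_entropy M (\<lambda>\<omega>. (Y k \<omega>, C \<omega>)) = discrete_entropy M (\<lambda>\<omega>. (C \<omega>, Y k \<omega>))"
    by (rule discrete_entropy_swap)+
  moreover have "discrete_entropy M (\<lambda>\<omega>. (C \<omega>, ?R \<omega>))
      \<le> discrete_entropy M C + (\<Sum>k\<in>U. discrete_entropy M (\<lambda>\<omega>. (C \<omega>, Y k \<omega>)) - discrete_entropy M C)"
    by (rule insert.IH) (simp add: insert.prems)
  ultimately show ?case
    unfolding sum.insert[OF insert.hyps] by linarith
qed

end

section \<open>Binary entropy and Fano's inequality\<close>

definition bin_entropy :: "real \<Rightarrow> real" where
  "bin_entropy p = - (p * ln p + (1 - p) * ln (1 - p))"

lemma bin_entropy_deriv:
  assumes "0 < x" "x < 1"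
  shows "(bin_entropy has_real_derivative (ln (1 - x) - ln x)) (at x)"
  unfolding bin_entropy_def[abs_def]
  using assms by (auto intro!: derivative_eq_intros)

lemma bin_entropy_nonneg:
  assumes "0 \<le> q" "q \<le> 1"
  shows "0 \<le> bin_entropy q"
proof -
  have "q * ln q \<le> 0"
    using assms by (cases "q = 0") (auto intro!: mult_nonneg_nonpos)
  moreover have "(1 - q) * ln (1 - q) \<le> 0"
    using assms by (cases "q = 1") (auto intro!: mult_nonneg_nonpos)
  ultimately show ?thesis
    by (simp add: bin_entropy_def)
qed

lemma bin_entropy_mono:
  assumes "0 \<le> p" "p \<le> q" "q \<le> 1/2"
  shows "bin_entropy p \<le> bin_entropy q"
proof (cases "p = 0")
  case True
  then show ?thesis
    using bin_entropy_nonneg[of q] assms by (simp add: bin_entropy_def)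
next
  case False
  show ?thesis
  proof (rule DERIV_nonneg_imp_nondecreasing[OF assms(2)])
    fix x assume "p \<le> x" "x \<le> q"
    then show "\<exists>y. DERIV bin_entropy x :> y \<and> 0 \<le> y"
      using False assms by (intro exI[of _ "ln (1 - x) - ln x"]) (auto intro!: bin_entropy_deriv)
  qed
qed

lemma bin_entropy_less_ln2:
  assumes "0 \<le> q" "q < 1/2"
  shows "bin_entropy q < ln 2"
proof (cases "q = 0")
  case True
  then show ?thesis
    by (simp add: bin_entropy_def)
next
  case False
  then obtain z where z: "q < z" "z < 1/2"
    and mvt: "bin_entropy (1/2) - bin_entropy q = (1/2 - q) * (ln (1 - z) - ln z)"
    using MVT2[of q "1/2" bin_entropy "\<lambda>x. ln (1 - x) - ln x"] assms bin_entropy_deriv by force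
  have "0 < (1/2 - q) * (ln (1 - z) - ln z)"
    using z assms False by simp
  moreover have "bin_entropy (1/2) = ln 2"
    by (simp add: bin_entropy_def ln_div)
  ultimately show ?thesis
    using mvt by simp
qed

context prob_space
begin

lemma discrete_entropy_bool:
  fixes D :: "'a \<Rightarrow> bool"
  assumes D: "simple_function M D"
  shows "discrete_entropy M D = bin_entropy (prob {\<omega>\<in>space M. D \<omega>})"
proof -
  have ev: "{\<omega>\<in>space M. D \<omega>} \<in> events"
    using simple_functionD(2)[OF D, of "{True}"] by (simp add: vimage_def Int_def conj_commute)
  have "D -` {True} \<inter> space M = {\<omega>\<in>space M. D \<omega>}" "D -` {False} \<inter> space M = space M - {\<omega>\<in>space M. D \<omega>}"
    by auto
  moreover have "discrete_entropy M D
      = - (\<Sum>a\<in>UNIV. prob (D -` {a} \<inter> space M) * ln (prob (D -` {a} \<inter> space M)))"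
    by (rule discrete_entropy_eq_sum) auto
  ultimately show ?thesis
    using ev by (simp add: UNIV_bool prob_compl bin_entropy_def)
qed

text \<open>The error indicator D \<noteq> g B together with g B determines D.\<close>
lemma discrete_entropy_Fano:
  fixes D :: "'a \<Rightarrow> bool" and g :: "'b \<Rightarrow> bool"
  assumes B: "simple_function M B" and D: "simple_function M D"
  shows "discrete_entropy M (\<lambda>\<omega>. (B \<omega>, D \<omega>))
    \<le> discrete_entropy M B + bin_entropy (prob {\<omega>\<in>space M. D \<omega> \<noteq> g (B \<omega>)})"
proof -
  let ?W = "\<lambda>\<omega>. g (B \<omega>)"
  let ?E = "\<lambda>\<omega>. D \<omega> \<noteq> g (B \<omega>)"
  have W: "simple_function M ?W"
    using B by (rule simple_function_compose1)
  have E: "simple_function M ?E"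
    using simple_function_compose1[OF simple_function_Pair[OF D W], of "\<lambda>(a, b). a \<noteq> b"] by simp
  have "discrete_entropy M (\<lambda>\<omega>. (D \<omega>, B \<omega>, ?W \<omega>)) + discrete_entropy M ?W
      \<le> discrete_entropy M (\<lambda>\<omega>. (D \<omega>, ?W \<omega>)) + discrete_entropy M (\<lambda>\<omega>. (B \<omega>, ?W \<omega>))"
    by (rule discrete_entropy_submodular[OF D B W])
  moreover have "discrete_entropy M (\<lambda>\<omega>. (D \<omega>, B \<omega>, ?W \<omega>)) = discrete_entropy M (\<lambda>\<omega>. (B \<omega>, D \<omega>))"
    "discrete_entropy M (\<lambda>\<omega>. (B \<omega>, ?W \<omega>)) = discrete_entropy M B"
    "discrete_entropy M (\<lambda>\<omega>. (D \<omega>, ?W \<omega>)) = discrete_entropy M (\<lambda>\<omega>. (?E \<omega>, ?W \<omega>))"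
    by (rule discrete_entropy_cong; auto)+
  moreover have "discrete_entropy M (\<lambda>\<omega>. (?E \<omega>, ?W \<omega>)) \<le> discrete_entropy M ?E + discrete_entropy M ?W"
    by (rule discrete_entropy_subadditive[OF E W])
  ultimately show ?thesis
    using discrete_entropy_bool[OF E] by linarith
qed

end

section \<open>Blocks of a stationary process\<close>

lemma length_block [simp]: "length (block X t n \<omega>) = n"
  by (simp add: block_def)

lemma block_0 [simp]: "block X t 0 \<omega> = []"
  by (simp add: block_def)

lemma block_Suc: "block X t (Suc n) \<omega> = block X t n \<omega> @ [X (t + 1 + int n) \<omega>]"
  by (simp add: block_def)

lemma block_take: "n \<le> N \<Longrightarrow> block X t n \<omega> = take n (block X t N \<omega>)"
  by (simp add: block_def take_map)

lemma block_add: "block X 0 (a + b) \<omega> = block X 0 a \<omega> @ block X (int a) b \<omega>"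
  by (induction b) (auto simp: block_Suc algebra_simps)

lemma block_mult: "block X 0 (m * n) \<omega> = concat (map (\<lambda>i. block X (int (i * n)) n \<omega>) [0..<m])"
proof (induction m)
  case (Suc m)
  have "block X 0 (Suc m * n) \<omega> = block X 0 (m * n) \<omega> @ block X (int (m * n)) n \<omega>"
    using block_add[of X "m * n" n \<omega>] by (simp add: add.commute)
  then show ?case
    using Suc by simp
qed simp

lemma block_mult_eq_iff:
  "block X 0 (m * n) \<omega> = block X 0 (m * n) \<omega>'
     \<longleftrightarrow> (\<forall>i<m. block X (int (i * n)) n \<omega> = block X (int (i * n)) n \<omega>')"
  unfolding block_mult by (subst concat_eq_concat_iff) (auto simp: set_zip map_eq_conv)

locale stationary_process = prob_space M for M :: "'w measure" +
  fixes X :: "int \<Rightarrow> 'w \<Rightarrow> 'x::finite"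
  assumes measurable_X: "\<And>i. X i \<in> measurable M (count_space UNIV)"
    and stationary: "stationary_proc M X"
begin

lemma simple_function_block: "simple_function M (block X t n)"
proof (induction n)
  case (Suc n)
  have "simple_function M (X (t + 1 + int n))"
    using measurable_sets[OF measurable_X] by (auto simp: simple_function_def)
  with Suc have "simple_function M (\<lambda>\<omega>. (\<lambda>(b, x). b @ [x]) (block X t n \<omega>, X (t + 1 + int n) \<omega>))"
    by (rule simple_function_compose1[OF simple_function_Pair])
  then show ?case
    by (simp add: block_Suc[abs_def])
qed simp

lemma event_block: "{\<omega>\<in>space M. P (block X t n \<omega>)} \<in> events"
  using simple_functionD(2)[OF simple_function_block[of t n], of "{w. P w}"]
  by (simp add: vimage_def Int_def conj_commute)

lemma prob_block_shift:
  "prob {\<omega>\<in>space M. P (block X t n \<omega>)} = prob {\<omega>\<in>space M. P (block X 0 n \<omega>)}"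
proof -
  have words: "finite {w. length w = n \<and> P w}"
    by (rule finite_subset[OF _ finite_lists_length_eq[of "UNIV :: 'x set" n]]) auto
  have "prob {\<omega>\<in>space M. P (block X s n \<omega>)}
      = (\<Sum>w\<in>{w. length w = n \<and> P w}. prob {\<omega>\<in>space M. block X s n \<omega> = w})" for s
  proof -
    have "{\<omega>\<in>space M. P (block X s n \<omega>)} = (\<Union>w\<in>{w. length w = n \<and> P w}. {\<omega>\<in>space M. block X s n \<omega> = w})"
      by auto
    moreover have "{\<omega>\<in>space M. block X s n \<omega> = w} \<in> events" for w
      using event_block[of "\<lambda>b. b = w"] by simp
    ultimately show ?thesis
      using words by (auto intro!: measure_finite_Union simp: disjoint_family_on_def)
  qed
  moreover have "prob {\<omega>\<in>space M. block X t n \<omega> = w} = prob {\<omega>\<in>space M. block X 0 n \<omega> = w}" for w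
    using stationary unfolding stationary_proc_def by blast
  ultimately show ?thesis
    by simp
qed

lemma discrete_entropy_block: "discrete_entropy M (block X t n) = block_entropy M X n"
proof -
  have "discrete_entropy M (block X t n) = - (\<Sum>w\<in>{w. length w = n}.
      prob {\<omega>\<in>space M. block X t n \<omega> = w} * ln (prob {\<omega>\<in>space M. block X t n \<omega> = w}))"
    using finite_lists_length_eq[of "UNIV :: 'x set" n]
    by (subst discrete_entropy_eq_sum[of "{w. length w = n}"])
       (auto simp: vimage_def Int_def conj_commute)
  then show ?thesis
    using prob_block_shift[of "\<lambda>b. b = _" t n] by (simp add: block_entropy_def)
qed

lemma discrete_entropy_blocks_le:
  assumes C: "simple_function M C"
  shows "discrete_entropy M (\<lambda>\<omega>. (C \<omega>, block X 0 (m * n) \<omega>))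
    \<le> discrete_entropy M C
       + (\<Sum>i<m. discrete_entropy M (\<lambda>\<omega>. (C \<omega>, block X (int (i * n)) n \<omega>)) - discrete_entropy M C)"
proof -
  have "discrete_entropy M (\<lambda>\<omega>. (C \<omega>, block X 0 (m * n) \<omega>))
      = discrete_entropy M (\<lambda>\<omega>. (C \<omega>, restrict (\<lambda>i. block X (int (i * n)) n \<omega>) {..<m}))"
    by (rule discrete_entropy_cong) (auto simp: block_mult_eq_iff restrict_eq_restrict_iff)
  also have "\<dots> \<le> discrete_entropy M C
       + (\<Sum>i<m. discrete_entropy M (\<lambda>\<omega>. (C \<omega>, block X (int (i * n)) n \<omega>)) - discrete_entropy M C)"
    using C by (intro discrete_entropy_restrict_le simple_function_block) auto
  finally show ?thesis .
qed

end

lemma block_entropy_telescope: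
  "block_entropy M X n - block_entropy M X (2 ^ J * n) / 2 ^ J
     = (\<Sum>j<J. excess_entropy M X (2 ^ j * n) / 2 ^ (j + 1))"
proof (induction J)
  case (Suc J)
  have "2 ^ Suc J * n = 2 * (2 ^ J * n)"
    by simp
  then have "block_entropy M X (2 ^ J * n) / 2 ^ J - block_entropy M X (2 ^ Suc J * n) / 2 ^ Suc J
      = excess_entropy M X (2 ^ J * n) / 2 ^ (J + 1)"
    by (simp add: excess_entropy_def field_simps)
  then show ?case
    using Suc by simp
qed simp

section \<open>Fair independent coins\<close>

locale fair_coins = prob_space M for M :: "'w measure" +
  fixes Z :: "nat \<Rightarrow> 'w \<Rightarrow> bool"
  assumes indep: "indep_vars (\<lambda>_. count_space UNIV) Z UNIV"
    and prob_False: "\<And>k. prob {\<omega>\<in>space M. Z k \<omega> = False} = 1/2"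
    and prob_True: "\<And>k. prob {\<omega>\<in>space M. Z k \<omega> = True} = 1/2"
begin

lemma simple_function_coin: "simple_function M (Z k)"
  using indep measurable_sets[of "Z k" M "count_space UNIV"]
  by (auto simp: indep_vars_def simple_function_def)

lemma prob_coins_eq:
  assumes U: "finite U" and v: "v \<in> (\<Pi>\<^sub>E k\<in>U. UNIV)"
  shows "prob {\<omega>\<in>space M. restrict (\<lambda>k. Z k \<omega>) U = v} = (1/2) ^ card U"
proof (cases "U = {}")
  case True
  then show ?thesis
    using v by (simp add: prob_space restrict_def)
next
  case False
  have "restrict (\<lambda>k. Z k \<omega>) U = v \<longleftrightarrow> (\<forall>k\<in>U. Z k \<omega> = v k)" for \<omega>
    using PiE_restrict[OF v] restrict_eq_restrict_iff[of "\<lambda>k. Z k \<omega>" U v] by simp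
  then have "{\<omega>\<in>space M. restrict (\<lambda>k. Z k \<omega>) U = v} = (\<Inter>k\<in>U. Z k -` {v k} \<inter> space M)"
    using False by auto
  moreover have "prob (\<Inter>k\<in>U. Z k -` {v k} \<inter> space M) = (\<Prod>k\<in>U. prob (Z k -` {v k} \<inter> space M))"
    using False U by (intro indep_varsD[OF indep]) auto
  moreover have "prob (Z k -` {v k} \<inter> space M) = 1/2" for k
    using prob_False[of k] prob_True[of k] by (cases "v k") (auto simp: vimage_def Int_def conj_commute)
  ultimately show ?thesis
    by simp
qed

lemma discrete_entropy_coins:
  assumes U: "finite U"
  shows "discrete_entropy M (\<lambda>\<omega>. restrict (\<lambda>k. Z k \<omega>) U) = card U * ln 2"
proof -
  let ?V = "\<Pi>\<^sub>E k\<in>U. (UNIV :: bool set)"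
  have "discrete_entropy M (\<lambda>\<omega>. restrict (\<lambda>k. Z k \<omega>) U)
      = - (\<Sum>v\<in>?V. (1/2) ^ card U * ln ((1/2) ^ card U))"
    using U prob_coins_eq[OF U]
    by (subst discrete_entropy_eq_sum[of ?V])
       (auto simp: finite_PiE vimage_def Int_def conj_commute intro!: sum.cong)
  also have "\<dots> = card U * ln 2"
    using U by (simp add: card_PiE ln_realpow ln_div power_one_over[symmetric]
        power_mult_distrib[symmetric])
  finally show ?thesis .
qed

end

section \<open>Decoding the coins from blocks\<close>

lemma (in prob_space) abs_prob_diff_le:
  assumes "A \<in> events" "B \<in> events" "G \<in> events" "A \<inter> G = B \<inter> G"
  shows "\<bar>prob A - prob B\<bar> \<le> 1 - prob G"
proof -
  have "prob C - prob (C \<inter> G) \<le> 1 - prob G" if "C \<in> events" for C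
  proof -
    have "prob C - prob (C \<inter> G) = prob (C - G)"
      using that assms(3) by (simp add: finite_measure_Diff')
    also have "\<dots> \<le> prob (space M - G)"
      using that assms(3) by (intro finite_measure_mono) (auto dest: sets.sets_into_space)
    finally show ?thesis
      using prob_compl[OF assms(3)] by simp
  qed
  then have "prob A - prob (A \<inter> G) \<le> 1 - prob G" "prob B - prob (B \<inter> G) \<le> 1 - prob G"
    using assms(1,2) by blast+
  moreover have "prob (A \<inter> G) \<le> prob B" "prob (B \<inter> G) \<le> prob A"
    using assms by (auto intro!: finite_measure_mono)
  ultimately show ?thesis
    unfolding abs_le_iff assms(4) by linarith
qed

locale stationary_process_with_coins = stationary_process M X + fair_coins M Z
  for M :: "'w measure" and X :: "int \<Rightarrow> 'w \<Rightarrow> 'x::finite" and Z :: "nat \<Rightarrow> 'w \<Rightarrow> bool"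
begin

lemma event_block_coin: "{\<omega>\<in>space M. P (block X t n \<omega>) (Z k \<omega>)} \<in> events"
  using simple_functionD(2)[OF simple_function_Pair[OF simple_function_block[of t n] simple_function_coin[of k]],
      of "{(w, z). P w z}"]
  by (simp add: vimage_def Int_def conj_commute)

text \<open>The event that the decoder gives the same answer on X_{t+1:t+n} and on the longer block
  X_{t+1:t+N} has a probability independent of t, and for large N it differs from the event of
  correct decoding on X_{t+1:t+n} only on the small event of incorrect decoding on X_{t+1:t+N}.\<close>
lemma prob_decoding_shift:
  fixes s :: "'x list \<Rightarrow> bool"
  assumes conv: "\<And>t. (\<lambda>N. prob {\<omega>\<in>space M. s (block X t N \<omega>) = Z k \<omega>}) \<longlonglongrightarrow> 1"
  shows "prob {\<omega>\<in>space M. s (block X t n \<omega>) = Z k \<omega>} = prob {\<omega>\<in>space M. s (block X 0 n \<omega>) = Z k \<omega>}"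
proof -
  define A where "A t' = {\<omega>\<in>space M. s (block X t' n \<omega>) = Z k \<omega>}" for t'
  define G where "G t' N = {\<omega>\<in>space M. s (block X t' N \<omega>) = Z k \<omega>}" for t' N
  define E where "E t' N = {\<omega>\<in>space M. s (take n (block X t' N \<omega>)) = s (block X t' N \<omega>)}" for t' N
  have close: "\<bar>prob (A t') - prob (E t' N)\<bar> \<le> 1 - prob (G t' N)" if "n \<le> N" for t' N
    using that unfolding A_def G_def E_def
    by (intro abs_prob_diff_le event_block event_block_coin) (auto simp: block_take[of n N])
  have "\<bar>prob (A t) - prob (A 0)\<bar> \<le> (1 - prob (G t N)) + (1 - prob (G 0 N))" if "n \<le> N" for N
  proof -
    have "prob (E t N) = prob (E 0 N)"
      unfolding E_def by (rule prob_block_shift)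
    then show ?thesis
      using close[OF that, of t] close[OF that, of 0] by linarith
  qed
  moreover have "(\<lambda>N. (1 - prob (G t N)) + (1 - prob (G 0 N))) \<longlonglongrightarrow> (1 - 1) + (1 - 1)"
    unfolding G_def by (intro tendsto_add tendsto_diff tendsto_const conv)
  ultimately have "\<bar>prob (A t) - prob (A 0)\<bar> \<le> (1 - 1) + (1 - 1)"
    by (intro tendsto_lowerbound[of _ "(1 - 1) + (1 - 1)" sequentially])
       (auto simp: eventually_at_top_linorder)
  then show ?thesis
    by (simp add: A_def)
qed

lemma block_entropy_mult_le:
  fixes s :: "nat \<Rightarrow> 'x list \<Rightarrow> bool"
  assumes U: "finite U" and q: "q \<le> 1/2"
    and err: "\<And>k i. k \<in> U \<Longrightarrow> i < m \<Longrightarrow>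
      prob {\<omega>\<in>space M. Z k \<omega> \<noteq> s k (block X (int (i * n)) n \<omega>)} \<le> q"
  shows "block_entropy M X (m * n)
    \<le> card U * ln 2 + m * (block_entropy M X n - card U * (ln 2 - bin_entropy q))"
proof -
  let ?Z = "\<lambda>\<omega>. restrict (\<lambda>k. Z k \<omega>) U"
  let ?B = "\<lambda>i. block X (int (i * n)) n"
  have sf_Z: "simple_function M ?Z"
    using U by (intro simple_function_restrict simple_function_coin)
  have per_block: "discrete_entropy M (\<lambda>\<omega>. (?Z \<omega>, ?B i \<omega>)) \<le> block_entropy M X n + card U * bin_entropy q"
    if i: "i < m" for i
  proof -
    have "discrete_entropy M (\<lambda>\<omega>. (?B i \<omega>, Z k \<omega>)) - discrete_entropy M (?B i) \<le> bin_entropy q"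
      if k: "k \<in> U" for k
    proof -
      have "discrete_entropy M (\<lambda>\<omega>. (?B i \<omega>, Z k \<omega>)) \<le> discrete_entropy M (?B i)
          + bin_entropy (prob {\<omega>\<in>space M. Z k \<omega> \<noteq> s k (?B i \<omega>)})"
        by (rule discrete_entropy_Fano[OF simple_function_block simple_function_coin])
      also have "bin_entropy (prob {\<omega>\<in>space M. Z k \<omega> \<noteq> s k (?B i \<omega>)}) \<le> bin_entropy q"
        using err[OF k i] q by (intro bin_entropy_mono) auto
      finally show ?thesis
        by simp
    qed
    then have "(\<Sum>k\<in>U. discrete_entropy M (\<lambda>\<omega>. (?B i \<omega>, Z k \<omega>)) - discrete_entropy M (?B i))
        \<le> card U * bin_entropy q"
      using sum_mono[of U _ "\<lambda>_. bin_entropy q"] by simp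
    moreover have "discrete_entropy M (\<lambda>\<omega>. (?B i \<omega>, ?Z \<omega>)) \<le> discrete_entropy M (?B i)
        + (\<Sum>k\<in>U. discrete_entropy M (\<lambda>\<omega>. (?B i \<omega>, Z k \<omega>)) - discrete_entropy M (?B i))"
      by (intro discrete_entropy_restrict_le U simple_function_block simple_function_coin)
    ultimately show ?thesis
      using discrete_entropy_swap[of M ?Z "?B i"] discrete_entropy_block by simp
  qed
  have "block_entropy M X (m * n) = discrete_entropy M (block X 0 (m * n))"
    by (simp add: discrete_entropy_block)
  also have "\<dots> \<le> discrete_entropy M (\<lambda>\<omega>. (?Z \<omega>, block X 0 (m * n) \<omega>))"
    by (rule discrete_entropy_le_pair[OF sf_Z simple_function_block])
  also have "\<dots> \<le> discrete_entropy M ?Z + (\<Sum>i<m. discrete_entropy M (\<lambda>\<omega>. (?Z \<omega>, ?B i \<omega>)) - discrete_entropy M ?Z)"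
    by (rule discrete_entropy_blocks_le[OF sf_Z])
  also have "\<dots> \<le> discrete_entropy M ?Z + (\<Sum>i<m. block_entropy M X n + card U * bin_entropy q - discrete_entropy M ?Z)"
    using per_block by (intro add_left_mono sum_mono) auto
  finally show ?thesis
    using discrete_entropy_coins[OF U] by (simp add: algebra_simps)
qed

lemma finite_card_decodable_keys_le:
  fixes s :: "nat \<Rightarrow> 'x list \<Rightarrow> bool" and n :: nat
  assumes conv: "\<And>k t. (\<lambda>N. prob {\<omega>\<in>space M. s k (block X t N \<omega>) = Z k \<omega>}) \<longlonglongrightarrow> 1"
    and \<delta>: "1/2 \<le> \<delta>"
    and gap: "0 < ln 2 - bin_entropy (1 - \<delta>) - ln 2 / 2 ^ J"
  defines "D \<equiv> {k. \<delta> \<le> prob {\<omega>\<in>space M. s k (block X 0 n \<omega>) = Z k \<omega>}}"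
  shows "finite D \<and> real (card D) * (ln 2 - bin_entropy (1 - \<delta>) - ln 2 / 2 ^ J)
    \<le> (\<Sum>j<J. excess_entropy M X (2 ^ j * n) / 2 ^ (j + 1))"
proof -
  let ?a = "ln 2 - bin_entropy (1 - \<delta>) - ln 2 / 2 ^ J"
  let ?S = "\<Sum>j<J. excess_entropy M X (2 ^ j * n) / 2 ^ (j + 1)"
  have bound: "real (card U) * ?a \<le> ?S" if U: "finite U" "U \<subseteq> D" for U
  proof -
    have "prob {\<omega>\<in>space M. Z k \<omega> \<noteq> s k (block X (int (i * n)) n \<omega>)} \<le> 1 - \<delta>" if "k \<in> U" for k i
    proof -
      have "{\<omega>\<in>space M. Z k \<omega> \<noteq> s k (block X (int (i * n)) n \<omega>)}
          = space M - {\<omega>\<in>space M. s k (block X (int (i * n)) n \<omega>) = Z k \<omega>}"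
        by auto
      then have "prob {\<omega>\<in>space M. Z k \<omega> \<noteq> s k (block X (int (i * n)) n \<omega>)}
          = 1 - prob {\<omega>\<in>space M. s k (block X (int (i * n)) n \<omega>) = Z k \<omega>}"
        using prob_compl[OF event_block_coin[of "\<lambda>w z. s k w = z"]] by simp
      moreover have "prob {\<omega>\<in>space M. s k (block X (int (i * n)) n \<omega>) = Z k \<omega>}
          = prob {\<omega>\<in>space M. s k (block X 0 n \<omega>) = Z k \<omega>}"
        by (rule prob_decoding_shift[OF conv])
      moreover have "\<delta> \<le> prob {\<omega>\<in>space M. s k (block X 0 n \<omega>) = Z k \<omega>}"
        using that U by (auto simp: D_def)
      ultimately show ?thesis
        by linarith
    qed
    then have "block_entropy M X (2 ^ J * n)
        \<le> card U * ln 2 + real (2 ^ J) * (block_entropy M X n - card U * (ln 2 - bin_entropy (1 - \<delta>)))"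
      using \<delta> by (intro block_entropy_mult_le[OF U(1)]) auto
    then show ?thesis
      using block_entropy_telescope[of M X n J] by (simp add: field_simps)
  qed
  have "finite D \<and> card D \<le> nat \<lfloor>?S / ?a\<rfloor>"
    using bound gap by (intro finite_if_finite_subsets_card_bdd) (simp add: le_nat_floor pos_le_divide_eq)
  then show ?thesis
    using bound by blast
qed

end

section \<open>From the entropy bound to the growth of the excess entropy\<close>

lemma eventually_dyadic_sum_le:
  fixes e :: "nat \<Rightarrow> real"
  assumes "\<beta> \<le> 1" "0 \<le> \<epsilon>" and ev: "eventually (\<lambda>n. e n \<le> \<epsilon> * real n powr \<beta>) sequentially"
  shows "eventually (\<lambda>n. (\<Sum>j<J. e (2 ^ j * n) / 2 ^ (j + 1)) \<le> real J * \<epsilon> * real n powr \<beta>) sequentially"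
proof -
  obtain N where N: "\<And>n. N \<le> n \<Longrightarrow> e n \<le> \<epsilon> * real n powr \<beta>"
    using ev by (auto simp: eventually_at_top_linorder)
  have term_le: "e (2 ^ j * n) / 2 ^ (j + 1) \<le> \<epsilon> * real n powr \<beta>" if "N \<le> n" for n j
  proof -
    have "1 * n \<le> 2 ^ j * n"
      by (intro mult_right_mono) simp_all
    with that have "N \<le> 2 ^ j * n"
      by linarith
    then have "e (2 ^ j * n) \<le> \<epsilon> * real (2 ^ j * n) powr \<beta>"
      by (rule N)
    also have "\<dots> = \<epsilon> * ((2 ^ j) powr \<beta> * real n powr \<beta>)"
      by (simp add: powr_mult)
    also have "\<dots> \<le> \<epsilon> * (2 ^ j * real n powr \<beta>)"
      using powr_mono[of \<beta> 1 "2 ^ j :: real"] assms(1,2) by (intro mult_left_mono mult_right_mono) auto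
    finally have "e (2 ^ j * n) / 2 ^ (j + 1) \<le> \<epsilon> * (2 ^ j * real n powr \<beta>) / 2 ^ (j + 1)"
      by (rule divide_right_mono) simp
    also have "\<dots> = \<epsilon> * real n powr \<beta> / 2"
      by (simp add: field_simps)
    also have "\<dots> \<le> \<epsilon> * real n powr \<beta>"
      using mult_nonneg_nonneg[OF assms(2) powr_ge_zero[of "real n" \<beta>]] by linarith
    finally show ?thesis .
  qed
  show ?thesis
    unfolding eventually_at_top_linorder
  proof (intro exI allI impI)
    fix n assume "N \<le> n"
    then have "(\<Sum>j<J. e (2 ^ j * n) / 2 ^ (j + 1)) \<le> (\<Sum>j<J. \<epsilon> * real n powr \<beta>)"
      by (intro sum_mono term_le)
    then show "(\<Sum>j<J. e (2 ^ j * n) / 2 ^ (j + 1)) \<le> real J * \<epsilon> * real n powr \<beta>"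
      by simp
  qed
qed

lemma limsup_pos_if_dominated:
  fixes c e :: "nat \<Rightarrow> real"
  assumes \<beta>: "\<beta> \<le> 1" and a: "0 < a"
    and pos: "liminf (\<lambda>n. ereal (c n) / ereal (real n powr \<beta>)) > 0"
    and dom: "\<And>n. a * c n \<le> (\<Sum>j<J. e (2 ^ j * n) / 2 ^ (j + 1))"
  shows "limsup (\<lambda>n. ereal (e n / real n powr \<beta>)) > 0"
proof (rule ccontr)
  assume "\<not> limsup (\<lambda>n. ereal (e n / real n powr \<beta>)) > 0"
  obtain c0 where c0: "0 < c0" "ereal c0 < liminf (\<lambda>n. ereal (c n) / ereal (real n powr \<beta>))"
    using ereal_dense2[OF pos] by (auto simp flip: zero_ereal_def)
  define \<epsilon> where "\<epsilon> = c0 * a / (real J + 1)"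
  have \<epsilon>: "0 < \<epsilon>" "real J * \<epsilon> \<le> a * c0"
    using c0 a by (simp_all add: \<epsilon>_def field_simps)
  have "limsup (\<lambda>n. ereal (e n / real n powr \<beta>)) < ereal \<epsilon>"
    using \<open>\<not> _ > 0\<close> \<epsilon>(1) by (simp add: not_less zero_ereal_def order.strict_trans1)
  then have "eventually (\<lambda>n. ereal (e n / real n powr \<beta>) < ereal \<epsilon>) sequentially"
    by (rule Limsup_lessD)
  then have "eventually (\<lambda>n. e n \<le> \<epsilon> * real n powr \<beta>) sequentially"
    using eventually_gt_at_top[of 0]
    by eventually_elim (simp add: divide_less_eq less_imp_le)
  from eventually_dyadic_sum_le[OF \<beta> less_imp_le[OF \<epsilon>(1)] this, of J]
    less_LiminfD[OF c0(2)] eventually_gt_at_top[of 0]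
  have "eventually (\<lambda>n. False) sequentially"
  proof eventually_elim
    case (elim n)
    then have n: "0 < real n powr \<beta>"
      by simp
    with elim(2) have "c0 * real n powr \<beta> < c n"
      by (simp add: field_simps)
    then have "a * c0 * real n powr \<beta> < a * c n"
      using a by simp
    also have "\<dots> \<le> real J * \<epsilon> * real n powr \<beta>"
      using dom[of n] elim(1) by linarith
    also have "\<dots> \<le> a * c0 * real n powr \<beta>"
      using \<epsilon>(2) n by (intro mult_right_mono) auto
    finally show False
      by simp
  qed
  then show False
    by simp
qed

theorem theorem2:
  fixes M :: "'w measure"
    and X :: "int \<Rightarrow> 'w \<Rightarrow> 'x::finite"
    and Z :: "nat \<Rightarrow> 'w \<Rightarrow> bool"
    and s :: "nat \<Rightarrow> 'x list \<Rightarrow> bool"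
    and \<beta> \<delta> :: real
  assumes "prob_space M"
    and "\<And>i. X i \<in> measurable M (count_space UNIV)"
    and "stationary_proc M X"
    and "prob_space.indep_vars M (\<lambda>_. count_space UNIV) Z UNIV"
    and "\<And>k. measure M {\<omega>\<in>space M. Z k \<omega> = False} = 1/2"
    and "\<And>k. measure M {\<omega>\<in>space M. Z k \<omega> = True} = 1/2"
    and "\<And>k t. (\<lambda>n. measure M {\<omega>\<in>space M. s k (block X t n \<omega>) = Z k \<omega>}) \<longlonglongrightarrow> 1"
    and "0 < \<beta>" and "\<beta> < 1" and "1/2 < \<delta>" and "\<delta> < 1"
    and "liminf (\<lambda>n. ecard {k. measure M {\<omega>\<in>space M. s k (block X 0 n \<omega>) = Z k \<omega>} \<ge> \<delta>}
                      / ereal (real n powr \<beta>)) > 0"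
  shows "limsup (\<lambda>n. ereal (excess_entropy M X n / real n powr \<beta>)) > 0"
proof -
  interpret stationary_process_with_coins M X Z
    by (intro stationary_process_with_coins.intro stationary_process.intro fair_coins.intro
        stationary_process_axioms.intro fair_coins_axioms.intro; rule assms)
  define D where "D n = {k. \<delta> \<le> prob {\<omega>\<in>space M. s k (block X 0 n \<omega>) = Z k \<omega>}}" for n
  define gap where "gap = ln 2 - bin_entropy (1 - \<delta>)"
  have "0 < gap"
    using bin_entropy_less_ln2[of "1 - \<delta>"] assms(10,11) by (simp add: gap_def)
  then obtain J :: nat where J: "ln 2 / 2 ^ J < gap"
    using real_arch_pow_inv[of "gap / ln 2" "1/2"] by (auto simp: field_simps power_one_over)
  have bound: "finite (D n) \<and> real (card (D n)) * (gap - ln 2 / 2 ^ J)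
      \<le> (\<Sum>j<J. excess_entropy M X (2 ^ j * n) / 2 ^ (j + 1))" for n
    unfolding D_def gap_def using assms(7,10) J by (intro finite_card_decodable_keys_le) (auto simp: gap_def)
  then have "(\<lambda>n. ecard (D n) / ereal (real n powr \<beta>))
      = (\<lambda>n. ereal (real (card (D n))) / ereal (real n powr \<beta>))"
    by (simp add: ecard_def)
  then show ?thesis
    using assms(9,12) J bound
    by (intro limsup_pos_if_dominated[of \<beta> "gap - ln 2 / 2 ^ J" "\<lambda>n. real (card (D n))"])
       (auto simp: D_def mult.commute)
qed

end
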